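(* Fix a predicate $P:\{-1,+1\}^k\to\{0,1\}$, $\varepsilon\ge0$ and $0\le\delta\le1$. Suppose $M$ is an $(\varepsilon,\delta)$-differentially private algorithm that maps CSP instances with respect to $P$ on $n$ variables to assignments in $\{\pm1\}^n$. Then there exists a CSP instance $\Phi$ with respect to $P$ such that $$\mathbb E[\mathrm{val}_\Phi(M(\Phi))]\ \le\ 1+\delta-e^{-\varepsilon}(1-\mu(P)).$$ In particular, when $\varepsilon\le1$ and $\delta=0$, $\mathbb E[\mathrm{val}_\Phi(M(\Phi))]\le\mu(P)+O(\varepsilon)$; and when $\varepsilon\gg1$ and $\delta=0$, $\mathbb E[\mathrm{val}_\Phi(M(\Phi))]\le1-e^{-\varepsilon}$ (up to the term $e^{-\varepsilon}\mu(P)$, i.e. $1-\Theta(e^{-\varepsilon})$).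
   Context: A CSP instance with respect to $P$ over variables $x_1,\dots,x_n$ is a multiset of $P$-constraints $(c,S)$, where $S\in[n]^k$ is the scope and $c\in\{-1,1\}^k$ is the negation pattern; $(c,S)$ is satisfied by $x$ iff $P(c_1x_{S_1},\dots,c_kx_{S_k})=1$. $\mathrm{val}_\Phi(x)$ is the fraction of constraints of $\Phi$ satisfied by $x$. $\mu(P)$ is the probability that $P$ is satisfied by a uniformly random input. Two instances are neighboring if one is obtained from the other by adding or removing one constraint; $M$ is $(\varepsilon,\delta)$-DP if $\Pr[M(\Phi)\in T]\le e^\varepsilon\Pr[M(\Phi')\in T]+\delta$ for all neighboring $\Phi,\Phi'$ and all output sets $T$. *)

theory Defs
  imports "HOL-Probability.Probability"
begin

definition pm1vecs :: "nat \<Rightarrow> int list set" where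
  "pm1vecs m = {y. length y = m \<and> set y \<subseteq> {-1, 1}}"

text \<open>A constraint (c,S): negation pattern c in {-1,1}^k and scope S in [n]^k
  (variables are indexed 0..n-1).\<close>
type_synonym constr = "int list \<times> nat list"

definition valid_constraint :: "nat \<Rightarrow> nat \<Rightarrow> constr \<Rightarrow> bool" where
  "valid_constraint k n C \<longleftrightarrow> fst C \<in> pm1vecs k \<and> length (snd C) = k \<and> set (snd C) \<subseteq> {0..<n}"

definition csp_instance :: "nat \<Rightarrow> nat \<Rightarrow> constr multiset \<Rightarrow> bool" where
  "csp_instance k n \<Phi> \<longleftrightarrow> (\<forall>C\<in>#\<Phi>. valid_constraint k n C)"

definition satisfies :: "(int list \<Rightarrow> bool) \<Rightarrow> int list \<Rightarrow> constr \<Rightarrow> bool" where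
  "satisfies P x C \<longleftrightarrow> P (map2 (*) (fst C) (map (\<lambda>i. x ! i) (snd C)))"

definition val :: "(int list \<Rightarrow> bool) \<Rightarrow> constr multiset \<Rightarrow> int list \<Rightarrow> real" where
  "val P \<Phi> x = real (size (filter_mset (satisfies P x) \<Phi>)) / real (size \<Phi>)"

definition mu :: "nat \<Rightarrow> (int list \<Rightarrow> bool) \<Rightarrow> real" where
  "mu k P = real (card {y \<in> pm1vecs k. P y}) / 2 ^ k"

definition neighboring :: "nat \<Rightarrow> nat \<Rightarrow> constr multiset \<Rightarrow> constr multiset \<Rightarrow> bool" where
  "neighboring k n \<Phi> \<Phi>' \<longleftrightarrow>
     (\<exists>C. valid_constraint k n C \<and> (\<Phi>' = add_mset C \<Phi> \<or> \<Phi> = add_mset C \<Phi>'))"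

definition diff_private ::
  "nat \<Rightarrow> nat \<Rightarrow> real \<Rightarrow> real \<Rightarrow> (constr multiset \<Rightarrow> 'b pmf) \<Rightarrow> bool" where
  "diff_private k n \<epsilon> \<delta> M \<longleftrightarrow>
     (\<forall>\<Phi> \<Phi>' T. csp_instance k n \<Phi> \<longrightarrow> csp_instance k n \<Phi>' \<longrightarrow> neighboring k n \<Phi> \<Phi>' \<longrightarrow>
        measure_pmf.prob (M \<Phi>) T \<le> exp \<epsilon> * measure_pmf.prob (M \<Phi>') T + \<delta>)"

end

theory Submission
  imports Defs
begin

text \<open>Use instances consisting of a single constraint all of whose literals are on the first
  variable. For a fixed sign \<open>s\<close> of that variable, the map \<open>c \<mapsto> s c\<close> permutes the negation
  patterns, so every assignment violates the constraint for exactly a \<open>1 - \<mu>(P)\<close> fraction of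
  the patterns \<open>c\<close>. Averaging over \<open>c\<close>, the output of \<open>M\<close> on the empty instance violates some
  fixed pattern \<open>c\<close> with probability at least \<open>1 - \<mu>(P)\<close>; by privacy, the output on the
  neighbouring one-constraint instance still violates it with probability at least
  \<open>e\<^sup>-\<^sup>\<epsilon> (1 - \<mu>(P)) - \<delta>\<close>.\<close>

lemma finite_pm1vecs: "finite (pm1vecs m)"
  and card_pm1vecs: "card (pm1vecs m) = 2 ^ m"
proof -
  have pm1vecs_eq: "pm1vecs m = {xs. set xs \<subseteq> {-1, 1} \<and> length xs = m}"
    unfolding pm1vecs_def by auto
  show "finite (pm1vecs m)"
    unfolding pm1vecs_eq by (rule finite_lists_length_eq) simp
  show "card (pm1vecs m) = 2 ^ m"
    unfolding pm1vecs_eq by (subst card_lists_length_eq) (auto simp: numeral_2_eq_2)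
qed

lemma card_pm1vecs_scaled:
  assumes "s \<in> {-1, 1}"
  shows "card {c \<in> pm1vecs k. P (map ((*) s) c)} = card {y \<in> pm1vecs k. P y}"
proof -
  let ?f = "map ((*) s)"
  have involution: "?f (?f c) = c" for c
    using assms by (induction c) auto
  have closed: "c \<in> pm1vecs k \<Longrightarrow> ?f c \<in> pm1vecs k" for c
    using assms unfolding pm1vecs_def by auto
  have "bij_betw ?f {c \<in> pm1vecs k. P (?f c)} {y \<in> pm1vecs k. P y}"
    by (rule bij_betw_byWitness[where f' = ?f]) (use involution closed in auto)
  then show ?thesis
    by (rule bij_betw_same_card)
qed

definition first_var_constraint :: "int list \<Rightarrow> constr" where
  "first_var_constraint c = (c, replicate (length c) 0)"

lemma valid_first_var_constraint:
  "c \<in> pm1vecs k \<Longrightarrow> 0 < n \<Longrightarrow> valid_constraint k n (first_var_constraint c)"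
  unfolding valid_constraint_def first_var_constraint_def pm1vecs_def by auto

lemma satisfies_first_var_constraint:
  "satisfies P x (first_var_constraint c) \<longleftrightarrow> P (map ((*) (x ! 0)) c)"
proof -
  have "map2 (*) c (map ((!) x) (replicate (length c) 0)) = map ((*) (x ! 0)) c"
    by (induction c) (auto simp: mult.commute)
  then show ?thesis
    unfolding satisfies_def first_var_constraint_def by simp
qed

lemma card_violated_first_var_constraints:
  assumes "x \<in> pm1vecs n" and "0 < n"
  shows "real (card {c \<in> pm1vecs k. \<not> satisfies P x (first_var_constraint c)})
           = 2 ^ k * (1 - mu k P)"
proof -
  have "x ! 0 \<in> set x"
    using assms unfolding pm1vecs_def by auto
  then have sign: "x ! 0 \<in> {-1, 1}"
    using assms(1) unfolding pm1vecs_def by auto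
  let ?sat = "{c \<in> pm1vecs k. satisfies P x (first_var_constraint c)}"
  have card_sat: "card ?sat = card {y \<in> pm1vecs k. P y}"
    using card_pm1vecs_scaled[OF sign] by (simp add: satisfies_first_var_constraint)
  have "{c \<in> pm1vecs k. \<not> satisfies P x (first_var_constraint c)} = pm1vecs k - ?sat"
    by blast
  then have "card {c \<in> pm1vecs k. \<not> satisfies P x (first_var_constraint c)} = 2 ^ k - card ?sat"
    by (simp add: card_Diff_subset finite_pm1vecs card_pm1vecs)
  moreover have "card ?sat \<le> 2 ^ k"
    using card_mono[OF finite_pm1vecs, of ?sat k] by (simp add: card_pm1vecs)
  ultimately show ?thesis
    using card_sat by (simp add: of_nat_diff mu_def field_simps)
qed

lemma sum_prob_violated_first_var_constraints:
  fixes p :: "int list pmf"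
  assumes "set_pmf p \<subseteq> pm1vecs n" and "0 < n"
  shows "(\<Sum>c\<in>pm1vecs k. measure_pmf.prob p {x. \<not> satisfies P x (first_var_constraint c)})
           = 2 ^ k * (1 - mu k P)"
proof -
  let ?V = "\<lambda>c. {x. \<not> satisfies P x (first_var_constraint c)}"
  have "finite (set_pmf p)"
    using assms(1) finite_pm1vecs finite_subset by blast
  then have "(\<Sum>c\<in>pm1vecs k. measure_pmf.prob p (?V c))
      = measure_pmf.expectation p (\<lambda>x. \<Sum>c\<in>pm1vecs k. indicator (?V c) x)"
    by (simp add: Bochner_Integration.integral_sum integrable_measure_pmf_finite)
  also have "\<dots> = measure_pmf.expectation p (\<lambda>_. 2 ^ k * (1 - mu k P))"
  proof (rule integral_cong_AE)
    show "AE x in measure_pmf p. (\<Sum>c\<in>pm1vecs k. indicator (?V c) x) = 2 ^ k * (1 - mu k P)"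
      using assms card_violated_first_var_constraints
      by (auto simp: AE_measure_pmf_iff indicator_def of_bool_def sum.If_cases finite_pm1vecs
          Int_def)
  qed simp_all
  finally show ?thesis
    by simp
qed

lemma ex_prob_violated_first_var_constraint_ge:
  fixes p :: "int list pmf"
  assumes "set_pmf p \<subseteq> pm1vecs n" and "0 < n"
  shows "\<exists>c\<in>pm1vecs k.
           1 - mu k P \<le> measure_pmf.prob p {x. \<not> satisfies P x (first_var_constraint c)}"
proof (rule ccontr)
  assume "\<not> ?thesis"
  then have "(\<Sum>c\<in>pm1vecs k. measure_pmf.prob p {x. \<not> satisfies P x (first_var_constraint c)})
      < real (card (pm1vecs k)) * (1 - mu k P)"
    by (intro sum_bounded_above_strict) (auto simp: card_pm1vecs)
  then show False
    using sum_prob_violated_first_var_constraints[OF assms] by (simp add: card_pm1vecs)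
qed

lemma expectation_val_singleton:
  fixes p :: "int list pmf"
  shows "measure_pmf.expectation p (val P {#C#}) = 1 - measure_pmf.prob p {x. \<not> satisfies P x C}"
proof -
  have "val P {#C#} = indicator (- {x. \<not> satisfies P x C})"
    by (auto simp: val_def indicator_def)
  then show ?thesis
    using measure_pmf.prob_compl[of "{x. \<not> satisfies P x C}" p] by (simp add: Compl_eq_Diff_UNIV)
qed

lemma diff_private_prob_lower_bound:
  assumes "diff_private k n \<epsilon> \<delta> M" and "0 \<le> \<epsilon>" and "0 \<le> \<delta>"
    and "csp_instance k n \<Phi>" and "csp_instance k n \<Phi>'" and "neighboring k n \<Phi> \<Phi>'"
  shows "exp (-\<epsilon>) * measure_pmf.prob (M \<Phi>) T \<le> measure_pmf.prob (M \<Phi>') T + \<delta>"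
proof -
  let ?q = "measure_pmf.prob (M \<Phi>') T"
  have "exp (-\<epsilon>) * measure_pmf.prob (M \<Phi>) T \<le> exp (-\<epsilon>) * (exp \<epsilon> * ?q + \<delta>)"
    using assms unfolding diff_private_def by (intro mult_left_mono) auto
  also have "\<dots> = ?q + exp (-\<epsilon>) * \<delta>"
    by (simp add: algebra_simps exp_minus)
  also have "\<dots> \<le> ?q + \<delta>"
    using assms(2,3) by (simp add: mult_left_le_one_le)
  finally show ?thesis .
qed

theorem theorem6p1:
  fixes k n :: nat and P :: "int list \<Rightarrow> bool" and \<epsilon> \<delta> :: real
    and M :: "constr multiset \<Rightarrow> int list pmf"
  assumes "n \<ge> 1"
    and "\<epsilon> \<ge> 0" and "0 \<le> \<delta>" and "\<delta> \<le> 1"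
    and "\<And>\<Phi>. csp_instance k n \<Phi> \<Longrightarrow> set_pmf (M \<Phi>) \<subseteq> pm1vecs n"
    and "diff_private k n \<epsilon> \<delta> M"
  shows "\<exists>\<Phi>. csp_instance k n \<Phi> \<and> \<Phi> \<noteq> {#} \<and>
           measure_pmf.expectation (M \<Phi>) (val P \<Phi>) \<le> 1 + \<delta> - exp (-\<epsilon>) * (1 - mu k P)"
proof -
  have n_pos: "0 < n" and empty: "csp_instance k n {#}"
    using assms(1) by (auto simp: csp_instance_def)
  obtain c where c: "c \<in> pm1vecs k"
    and violated: "1 - mu k P \<le> measure_pmf.prob (M {#}) {x. \<not> satisfies P x (first_var_constraint c)}"
    using ex_prob_violated_first_var_constraint_ge[OF assms(5)[OF empty] n_pos] by blast
  let ?V = "{x. \<not> satisfies P x (first_var_constraint c)}"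
  define \<Phi> where "\<Phi> = {#first_var_constraint c#}"
  have valid: "valid_constraint k n (first_var_constraint c)"
    using valid_first_var_constraint[OF c n_pos] .
  then have \<Phi>: "csp_instance k n \<Phi>"
    by (simp add: \<Phi>_def csp_instance_def)
  have "neighboring k n {#} \<Phi>"
    unfolding neighboring_def \<Phi>_def using valid by blast
  have "exp (-\<epsilon>) * (1 - mu k P) \<le> exp (-\<epsilon>) * measure_pmf.prob (M {#}) ?V"
    using violated by simp
  also have "\<dots> \<le> measure_pmf.prob (M \<Phi>) ?V + \<delta>"
    by (rule diff_private_prob_lower_bound) (use assms empty \<Phi> \<open>neighboring k n {#} \<Phi>\<close> in auto)
  finally have "measure_pmf.expectation (M \<Phi>) (val P \<Phi>) \<le> 1 + \<delta> - exp (-\<epsilon>) * (1 - mu k P)"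
    by (simp add: \<Phi>_def expectation_val_singleton)
  with \<Phi> show ?thesis
    by (auto simp: \<Phi>_def)
qed

end
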